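(* Fix $d\ge 1$, a communication radius $r\in(0,1]$, a unit vector $w\in\mathbb{R}^d$, and $\epsilon,\delta\in(0,1)$. Then there exists $N_0$ such that for all $N\ge N_0$, with probability at least $1-\delta$ over the random positions of the $N$ sensors, the target configuration is an $\epsilon$-equilibrium of the sensor consensus game.
   Context: Sensors $1,\dots,N$ have positions $x_1,\dots,x_N$ drawn i.i.d. uniformly from the unit ball $\{x\in\mathbb{R}^d:\|x\|\le 1\}$. The target separator is the hyperplane $\{x: w\cdot x=0\}$ for a fixed unit vector $w$, and the target label of a point $x$ is $t(x)=\mathrm{sign}(w\cdot x)\in\{+1,-1\}$. Two distinct sensors $i\neq j$ are neighbors if $\|x_i-x_j\|\le r$. Each sensor is in a state in $\{+1,-1\}$. In the sensor consensus game, the payoff of a sensor $i$ with at least one neighbor is (number of neighbors in the same state as $i$ minus number of neighbors in the opposite state) divided by the number of neighbors of $i$. A configuration of states is an $\epsilon$-equilibrium if every sensor has at least one neighbor and no sensor can increase its payoff by more than $\epsilon$ by switching its own state (all other states fixed). The target configuration is the one in which each sensor $i$ is in state $t(x_i)$. *)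

theory Defs
  imports "HOL-Probability.Probability"
begin

definition neighbors :: "nat \<Rightarrow> real \<Rightarrow> (nat \<Rightarrow> 'a::euclidean_space) \<Rightarrow> nat \<Rightarrow> nat set" where
  "neighbors N r x i = {j \<in> {..<N}. j \<noteq> i \<and> dist (x i) (x j) \<le> r}"

text \<open>Payoff of sensor i in state configuration s (states in {1,-1}).\<close>
definition payoff :: "nat \<Rightarrow> real \<Rightarrow> (nat \<Rightarrow> 'a::euclidean_space) \<Rightarrow> (nat \<Rightarrow> int) \<Rightarrow> nat \<Rightarrow> real" where
  "payoff N r x s i =
     (real (card {j \<in> neighbors N r x i. s j = s i})
      - real (card {j \<in> neighbors N r x i. s j \<noteq> s i}))
     / real (card (neighbors N r x i))"

definition eps_equilibrium :: "nat \<Rightarrow> real \<Rightarrow> (nat \<Rightarrow> 'a::euclidean_space) \<Rightarrow> real \<Rightarrow> (nat \<Rightarrow> int) \<Rightarrow> bool" where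
  "eps_equilibrium N r x \<epsilon> s \<longleftrightarrow>
     (\<forall>i<N. neighbors N r x i \<noteq> {}) \<and>
     (\<forall>i<N. payoff N r x (s(i := - s i)) i \<le> payoff N r x s i + \<epsilon>)"

text \<open>Target label; points on the hyperplane (a null set) are labelled +1.\<close>
definition target_label :: "'a::euclidean_space \<Rightarrow> 'a \<Rightarrow> int" where
  "target_label w y = (if w \<bullet> y \<ge> 0 then 1 else -1)"

definition target_config :: "'a::euclidean_space \<Rightarrow> (nat \<Rightarrow> 'a) \<Rightarrow> nat \<Rightarrow> int" where
  "target_config w x = (\<lambda>i. target_label w (x i))"

definition sensor_measure :: "nat \<Rightarrow> (nat \<Rightarrow> 'a::euclidean_space) measure" where
  "sensor_measure N = PiM {..<N} (\<lambda>_. uniform_measure lborel (cball 0 1))"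

end

theory Submission
  imports Defs
begin

text \<open>
  Call the score of sensor \<open>i\<close> the sum over the other sensors \<open>j\<close> of \<open>0\<close> if \<open>j\<close> is out of
  range and of \<open>\<plusminus>1 + \<epsilon>/2\<close> otherwise, the sign telling whether \<open>i\<close> and \<open>j\<close> carry the same target label.
  A sensor with \<open>n\<close> neighbours, \<open>d\<close> more of them agreeing than disagreeing, earns payoff \<open>d/n\<close> and
  \<open>-d/n\<close> after switching, and its score is \<open>d + \<epsilon>n/2\<close>; so the target configuration is an \<open>\<epsilon>\<close>-equilibrium
  as soon as every score is positive.  Given the position \<open>a\<close> of sensor \<open>i\<close>, the summands of its score
  are i.i.d., bounded in \<open>[-1, 2]\<close>, and have mean at least \<open>\<mu> = \<epsilon>/2 \<cdot> (r/2)^d\<close>: reflecting across the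
  separating hyperplane shows that near \<open>a\<close> the unit ball contains at least as much volume on the side
  of \<open>a\<close> as on the other side, and \<open>B(a,r) \<inter> B(0,1)\<close> has relative volume at least \<open>(r/2)^d\<close>.
  Hoeffding's inequality bounds the probability of a nonpositive score by \<open>exp(-2(N-1)\<mu>^2/9)\<close>, and a
  union bound over the \<open>N\<close> sensors leaves a failure probability \<open>N exp(-c(N-1)) \<to> 0\<close>.
\<close>

definition neighbour_score :: "real \<Rightarrow> real \<Rightarrow> 'a::euclidean_space \<Rightarrow> 'a \<Rightarrow> 'a \<Rightarrow> real" where
  "neighbour_score r \<epsilon> w a b =
     (if dist a b \<le> r then (if target_label w b = target_label w a then 1 else -1) + \<epsilon>/2 else 0)"

definition sensor_score :: "nat \<Rightarrow> real \<Rightarrow> real \<Rightarrow> 'a::euclidean_space \<Rightarrow> (nat \<Rightarrow> 'a) \<Rightarrow> nat \<Rightarrow> real" where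
  "sensor_score N r \<epsilon> w x i = (\<Sum>j\<in>{..<N}-{i}. neighbour_score r \<epsilon> w (x i) (x j))"

text \<open>Flipping the state of sensor \<open>i\<close> turns its payoff \<open>d/n\<close> into \<open>-d/n\<close>, so the deviation gains
  at most \<open>\<epsilon>\<close> exactly when \<open>0 \<le> d + \<epsilon>n/2\<close>, i.e. when the score is nonnegative.\<close>

lemma deviation_bounded_iff_score_nonneg:
  fixes x :: "nat \<Rightarrow> 'a::euclidean_space" and w :: 'a
  assumes ne: "neighbors N r x i \<noteq> {}"
  defines "s \<equiv> target_config w x"
  shows "payoff N r x (s(i := - s i)) i \<le> payoff N r x s i + \<epsilon> \<longleftrightarrow> 0 \<le> sensor_score N r \<epsilon> w x i"
proof -
  define S where "S = neighbors N r x i"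
  define A where "A = {j\<in>S. s j = s i}"
  define D where "D = {j\<in>S. s j \<noteq> s i}"
  have fin: "finite S" and i_notin: "i \<notin> S" by (simp_all add: S_def neighbors_def)
  have n_pos: "real (card S) > 0" using ne fin by (simp add: S_def card_gt_0_iff)
  have flip: "s j = - s i \<longleftrightarrow> s j \<noteq> s i" for j
    by (auto simp: s_def target_config_def target_label_def)
  have payoff_s: "payoff N r x s i = (real (card A) - real (card D)) / real (card S)"
    by (simp add: payoff_def A_def D_def S_def)
  have "{j \<in> S. (s(i := - s i)) j = (s(i := - s i)) i} = D"
       "{j \<in> S. (s(i := - s i)) j \<noteq> (s(i := - s i)) i} = A"
    using i_notin flip unfolding A_def D_def by auto
  then have payoff_flip: "payoff N r x (s(i := - s i)) i = (real (card D) - real (card A)) / real (card S)"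
    by (simp add: payoff_def S_def)
  have "sensor_score N r \<epsilon> w x i = (\<Sum>j\<in>S. (if s j = s i then 1 else -1) + \<epsilon>/2)"
    unfolding sensor_score_def neighbour_score_def s_def target_config_def
    by (subst sum.inter_filter[symmetric]) (auto simp: S_def neighbors_def intro!: sum.cong)
  also have "\<dots> = real (card A) - real (card D) + \<epsilon>/2 * real (card S)"
    using fin by (simp add: sum.distrib sum.If_cases A_def D_def Int_def set_diff_eq)
  finally have score: "sensor_score N r \<epsilon> w x i = real (card A) - real (card D) + \<epsilon>/2 * real (card S)" .
  have flip_iff: "(b - a) / n \<le> (a - b) / n + \<epsilon> \<longleftrightarrow> 0 \<le> a - b + \<epsilon>/2 * n"
    if "n > 0" for a b n :: real
  proof -
    have "(b - a) / n \<le> (a - b) / n + \<epsilon> \<longleftrightarrow> (b - a) / n * n \<le> ((a - b) / n + \<epsilon>) * n"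
      by (rule mult_le_cancel_right_pos[OF that, symmetric])
    also have "\<dots> \<longleftrightarrow> b - a \<le> a - b + \<epsilon> * n"
      using that by (simp add: distrib_right)
    finally show ?thesis by linarith
  qed
  show ?thesis
    unfolding payoff_s payoff_flip score by (rule flip_iff[OF n_pos])
qed

lemma sensor_score_isolated:
  assumes "\<forall>j\<in>{..<N}-{i}. \<not> dist (x i) (x j) \<le> r"
  shows "sensor_score N r \<epsilon> w x i = 0"
  using assms by (auto simp: sensor_score_def neighbour_score_def intro!: sum.neutral)

text \<open>The equilibrium condition for the target configuration in terms of scores; in particular the
  set of good placements is measurable.\<close>

lemma target_equilibrium_iff:
  fixes x :: "nat \<Rightarrow> 'a::euclidean_space"
  shows "eps_equilibrium N r x \<epsilon> (target_config w x) \<longleftrightarrow>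
    (\<forall>i<N. (\<exists>j\<in>{..<N}-{i}. dist (x i) (x j) \<le> r) \<and> 0 \<le> sensor_score N r \<epsilon> w x i)"
proof -
  have has_neighbour: "neighbors N r x i \<noteq> {} \<longleftrightarrow> (\<exists>j\<in>{..<N}-{i}. dist (x i) (x j) \<le> r)" for i
    by (auto simp: neighbors_def)
  show ?thesis
    unfolding eps_equilibrium_def has_neighbour[symmetric]
    using deviation_bounded_iff_score_nonneg[of N r x _ w \<epsilon>] by (metis (no_types, lifting))
qed

text \<open>If the target configuration fails to be an \<open>\<epsilon>\<close>-equilibrium, some sensor has nonpositive score
  (an isolated sensor has score zero).\<close>

lemma non_equilibrium_has_bad_sensor:
  fixes x :: "nat \<Rightarrow> 'a::euclidean_space"
  assumes "\<not> eps_equilibrium N r x \<epsilon> (target_config w x)"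
  shows "\<exists>i<N. sensor_score N r \<epsilon> w x i \<le> 0"
proof -
  obtain i where "i < N" and i: "\<not> ((\<exists>j\<in>{..<N}-{i}. dist (x i) (x j) \<le> r) \<and> 0 \<le> sensor_score N r \<epsilon> w x i)"
    using assms unfolding target_equilibrium_iff by blast
  moreover from i have "sensor_score N r \<epsilon> w x i \<le> 0"
    using sensor_score_isolated[of N i x r \<epsilon> w]
    by (cases "\<exists>j\<in>{..<N}-{i}. dist (x i) (x j) \<le> r") auto
  ultimately show ?thesis by blast
qed

text \<open>Moving the centres of a countable family of disjoint balls inside \<open>T\<close> does not push the measure of
  their union above that of \<open>T\<close>, since every ball keeps its volume.\<close>

lemma measure_recentred_disjoint_balls_le:
  fixes a c :: "'i \<Rightarrow> 'a::euclidean_space" and \<rho> :: "'i \<Rightarrow> real"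
  assumes C: "countable C"
    and disj: "pairwise (\<lambda>i j. disjnt (ball (a i) (\<rho> i)) (ball (a j) (\<rho> j))) C"
    and inside: "\<And>i. i \<in> C \<Longrightarrow> 0 < \<rho> i \<and> ball (a i) (\<rho> i) \<subseteq> T" and T: "T \<in> lmeasurable"
  shows "(\<Union>i\<in>C. ball (c i) (\<rho> i)) \<in> lmeasurable"
    and "measure lebesgue (\<Union>i\<in>C. ball (c i) (\<rho> i)) \<le> measure lebesgue T"
proof -
  let ?\<mu> = "measure lebesgue"
  have bound: "?\<mu> (\<Union>i\<in>K. ball (c i) (\<rho> i)) \<le> ?\<mu> T" if K: "K \<subseteq> C" "finite K" for K
  proof -
    have "?\<mu> (\<Union>i\<in>K. ball (c i) (\<rho> i)) \<le> (\<Sum>i\<in>K. ?\<mu> (ball (c i) (\<rho> i)))"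
      by (rule measure_UNION_le) (auto simp: K)
    also have "\<dots> = (\<Sum>i\<in>K. ?\<mu> (ball (a i) (\<rho> i)))"
    proof (rule sum.cong)
      fix i assume "i \<in> K"
      then have "\<rho> i > 0" using K inside by auto
      then show "?\<mu> (ball (c i) (\<rho> i)) = ?\<mu> (ball (a i) (\<rho> i))" by (simp add: content_ball)
    qed simp
    also have "\<dots> = ?\<mu> (\<Union>i\<in>K. ball (a i) (\<rho> i))"
      by (rule measure_UNION'[symmetric]) (use K pairwise_subset[OF disj] in auto)
    also have "\<dots> \<le> ?\<mu> T"
      by (rule measure_mono_fmeasurable) (use K inside T in \<open>fastforce+\<close>)
    finally show ?thesis .
  qed
  then show "(\<Union>i\<in>C. ball (c i) (\<rho> i)) \<in> lmeasurable" "?\<mu> (\<Union>i\<in>C. ball (c i) (\<rho> i)) \<le> ?\<mu> T"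
    by (auto intro!: fmeasurable_UN_bound[OF C] measure_UN_bound[OF C])
qed

text \<open>A linear isometry does not increase Lebesgue measure: cover \<open>S\<close> up to a null set by disjoint balls
  inside an open \<open>T \<supseteq> S\<close> of almost the same measure (Vitali), and map the balls to balls of the same radius.
  The library states this only for \<open>real^'n\<close>; here it is needed on an arbitrary Euclidean space.\<close>

lemma linear_isometry_measure_le:
  fixes f :: "'a::euclidean_space \<Rightarrow> 'a"
  assumes lin: "linear f" and iso: "\<And>x. norm (f x) = norm x" and S: "S \<in> lmeasurable"
  shows "measure lebesgue (f ` S) \<le> measure lebesgue S"
proof (rule field_le_epsilon)
  fix d :: real assume "d > 0"
  let ?\<mu> = "measure lebesgue"
  obtain T where T: "open T" "S \<subseteq> T" and TS: "(T-S) \<in> lmeasurable" and "emeasure lebesgue (T-S) < ennreal d"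
    using S \<open>d > 0\<close> sets_lebesgue_outer_open by blast
  then have "?\<mu> (T-S) < d"
    by (metis emeasure_eq_measure2 ennreal_leI not_less)
  with S T TS have "T \<in> lmeasurable" and T_close: "?\<mu> T < ?\<mu> S + d"
    by (auto simp: measurable_measure_Diff dest!: fmeasurable_Diff_D)
  have f_ball: "f ` ball x s \<subseteq> ball (f x) s" for x s
    using iso lin by (auto simp: dist_norm linear_diff[OF lin, symmetric])
  let ?K = "{(x,t) |x t. x \<in> S \<and> 0 < t \<and> ball x t \<subseteq> T}"
  obtain C where C: "countable C" and C_sub: "C \<subseteq> ?K"
    and disj: "pairwise (\<lambda>i j. disjnt (ball (fst i) (snd i)) (ball (fst j) (snd j))) C"
    and rest: "negligible (S - (\<Union>i \<in> C. ball (fst i) (snd i)))"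
  proof (rule Vitali_covering_theorem_balls [of S ?K fst snd])
    fix x d assume "x \<in> S" "0 < (d::real)"
    obtain l where "l > 0" "ball x l \<subseteq> T" using \<open>x \<in> S\<close> T openE by blast
    then show "\<exists>i. i \<in> ?K \<and> x \<in> ball (fst i) (snd i) \<and> snd i < d"
      using \<open>x \<in> S\<close> \<open>0 < d\<close>
      by (rule_tac x="(x, min l (d/2))" in exI) auto
  qed auto
  let ?U = "\<Union>i \<in> C. ball (f (fst i)) (snd i)"
  have "\<And>i. i \<in> C \<Longrightarrow> 0 < snd i \<and> ball (fst i) (snd i) \<subseteq> T" using C_sub by force
  note balls = measure_recentred_disjoint_balls_le[OF C disj this \<open>T \<in> lmeasurable\<close>, of "f \<circ> fst"]
  have U: "?U \<in> lmeasurable" "?\<mu> ?U \<le> ?\<mu> T" using balls by simp_all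
  have rest_image: "negligible (f ` (S - (\<Union>i \<in> C. ball (fst i) (snd i))))"
    by (rule negligible_differentiable_image_negligible[OF order_refl rest])
       (simp add: lin linear_imp_differentiable_on)
  have "f ` S \<subseteq> ?U \<union> f ` (S - (\<Union>i \<in> C. ball (fst i) (snd i)))"
    using f_ball by blast
  moreover have "f ` S \<in> sets lebesgue"
    by (rule differentiable_image_in_sets_lebesgue) (use S lin in \<open>auto simp: linear_imp_differentiable_on\<close>)
  moreover have "?U \<union> f ` (S - (\<Union>i \<in> C. ball (fst i) (snd i))) \<in> lmeasurable"
    using U rest_image by (simp add: fmeasurable.Un negligible_imp_measurable)
  ultimately have "?\<mu> (f ` S) \<le> ?\<mu> (?U \<union> f ` (S - (\<Union>i \<in> C. ball (fst i) (snd i))))"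
    by (rule measure_mono_fmeasurable)
  also have "\<dots> \<le> ?\<mu> ?U + ?\<mu> (f ` (S - (\<Union>i \<in> C. ball (fst i) (snd i))))"
    by (rule measure_Un_le) (use U rest_image in \<open>auto simp: negligible_imp_sets\<close>)
  also have "\<dots> = ?\<mu> ?U" using rest_image negligible_imp_measure0 by auto
  finally show "?\<mu> (f ` S) \<le> ?\<mu> S + d" using U T_close by linarith
qed

definition reflect_across :: "'a::real_inner \<Rightarrow> 'a \<Rightarrow> 'a" where
  "reflect_across v y = y - (2 * (v \<bullet> y)) *\<^sub>R v"

lemma reflect_across_properties:
  fixes v :: "'a::real_inner"
  assumes v: "norm v = 1"
  shows reflect_across_linear: "linear (reflect_across v)"
    and reflect_across_normal: "v \<bullet> reflect_across v y = - (v \<bullet> y)"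
    and reflect_across_involution: "reflect_across v (reflect_across v y) = y"
    and reflect_across_dist: "(norm (reflect_across v y - z))\<^sup>2 = (norm (y - z))\<^sup>2 + 4 * (v \<bullet> y) * (v \<bullet> z)"
    and reflect_across_norm: "norm (reflect_across v y) = norm y"
proof -
  have vv: "v \<bullet> v = 1" using v by (simp add: norm_eq_1)
  show "linear (reflect_across v)" unfolding reflect_across_def
    by (rule linearI) (auto simp: algebra_simps inner_add_right inner_scaleR_right)
  show normal: "v \<bullet> reflect_across v y = - (v \<bullet> y)" for y
    by (simp add: reflect_across_def inner_diff_right vv)
  show "reflect_across v (reflect_across v y) = y"
    by (simp add: reflect_across_def [of v "reflect_across v y"] normal) (simp add: reflect_across_def)
  show dist: "(norm (reflect_across v y - z))\<^sup>2 = (norm (y - z))\<^sup>2 + 4 * (v \<bullet> y) * (v \<bullet> z)" for y z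
    by (simp add: reflect_across_def power2_norm_eq_inner inner_diff_left inner_diff_right vv
          inner_commute algebra_simps)
  show "norm (reflect_across v y) = norm y"
    using dist[of y 0] by (simp add: power2_eq_iff_nonneg)
qed

text \<open>Inside a ball centred on the positive side of the hyperplane, the part of the unit ball on the
  negative side is no larger than the part on the positive side: the reflection maps the former into the latter.\<close>

lemma reflection_halfspace_le:
  fixes v a :: "'a::euclidean_space" and r :: real
  assumes v: "norm v = 1" and va: "v \<bullet> a \<ge> 0"
  shows "measure lebesgue (cball a r \<inter> cball 0 1 \<inter> {y. v \<bullet> y \<le> 0})
       \<le> measure lebesgue (cball a r \<inter> cball 0 1 \<inter> {y. v \<bullet> y \<ge> 0})"
proof -
  define R where "R = reflect_across v"
  note R = reflect_across_properties[OF v, folded R_def]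
  define X where "X = cball a r \<inter> cball 0 1 \<inter> {y. v \<bullet> y \<le> 0}"
  define Y where "Y = cball a r \<inter> cball 0 1 \<inter> {y. v \<bullet> y \<ge> 0}"
  have X: "X \<in> lmeasurable" unfolding X_def
    by (intro fmeasurable_Int_fmeasurable) (auto intro!: borel_closed closed_halfspace_le)
  have Y: "Y \<in> lmeasurable" unfolding Y_def
    by (intro fmeasurable_Int_fmeasurable) (auto intro!: borel_closed closed_halfspace_ge)
  have RX_sub: "R ` X \<subseteq> Y"
  proof
    fix z assume "z \<in> R ` X"
    then obtain y where y: "y \<in> X" "z = R y" by auto
    have "(v \<bullet> y) * (v \<bullet> a) \<le> 0"
      using y va unfolding X_def by (auto intro!: mult_nonpos_nonneg)
    then have "(norm (R y - a))\<^sup>2 \<le> (norm (y - a))\<^sup>2" using R(4)[of y a] by linarith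
    then have "norm (R y - a) \<le> norm (y - a)"
      using power2_le_imp_le by fastforce
    then show "z \<in> Y" using y R(2,5) unfolding X_def Y_def
      by (auto simp: dist_norm norm_minus_commute)
  qed
  have RX_sets: "R ` X \<in> sets lebesgue"
    by (rule differentiable_image_in_sets_lebesgue) (use X R(1) in \<open>auto simp: linear_imp_differentiable_on\<close>)
  then have RX: "R ` X \<in> lmeasurable"
    using Y RX_sub by (metis fmeasurableI2)
  have "measure lebesgue X = measure lebesgue (R ` (R ` X))"
    by (simp add: image_image R(3))
  also have "\<dots> \<le> measure lebesgue (R ` X)"
    by (rule linear_isometry_measure_le[OF R(1) R(5) RX])
  also have "\<dots> \<le> measure lebesgue Y"
    by (rule measure_mono_fmeasurable[OF RX_sub RX_sets Y])
  finally show ?thesis unfolding X_def Y_def .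
qed

lemma target_label_measurable[measurable]:
  "(\<lambda>b. target_label w b) \<in> borel_measurable borel"
  unfolding target_label_def by measurable

lemma disagreeing_part_le_agreeing_part:
  fixes w a :: "'a::euclidean_space"
  assumes w: "norm w = 1"
  shows "measure lebesgue (cball 0 1 \<inter> {b. dist a b \<le> r \<and> target_label w b \<noteq> target_label w a})
       \<le> measure lebesgue (cball 0 1 \<inter> {b. dist a b \<le> r \<and> target_label w b = target_label w a})"
    (is "measure lebesgue (cball 0 1 \<inter> ?Q) \<le> measure lebesgue (cball 0 1 \<inter> ?P)")
proof -
  have ball_part: "cball (0::'a) 1 \<inter> X \<in> lmeasurable" if "X \<in> sets borel" for X
    by (rule fmeasurableI2[of "cball 0 1"]) (use that in auto)
  have "{b \<in> space borel. dist a b \<le> r \<and> target_label w b = target_label w a} \<in> sets borel"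
       "{b \<in> space borel. dist a b \<le> r \<and> target_label w b \<noteq> target_label w a} \<in> sets borel"
    by measurable
  then have P: "cball 0 1 \<inter> ?P \<in> lmeasurable" and Q: "cball 0 1 \<inter> ?Q \<in> lmeasurable"
    by (auto intro!: ball_part)
  show ?thesis
  proof (cases "w \<bullet> a \<ge> 0")
    case True
    have "measure lebesgue (cball 0 1 \<inter> ?Q) \<le> measure lebesgue (cball a r \<inter> cball 0 1 \<inter> {y. w \<bullet> y \<le> 0})"
      by (rule measure_mono_fmeasurable)
         (use True Q in \<open>auto simp: target_label_def intro!: fmeasurable_Int_fmeasurable borel_closed closed_halfspace_le split: if_splits\<close>)
    also have "\<dots> \<le> measure lebesgue (cball a r \<inter> cball 0 1 \<inter> {y. w \<bullet> y \<ge> 0})"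
      by (rule reflection_halfspace_le[OF w True])
    also have "\<dots> \<le> measure lebesgue (cball 0 1 \<inter> ?P)"
      by (rule measure_mono_fmeasurable)
         (use True P in \<open>auto simp: target_label_def split: if_splits\<close>)
    finally show ?thesis .
  next
    case False
    (* reflect with respect to -w; the hyperplane, where the labelling convention is asymmetric, is negligible *)
    have w': "norm (-w) = 1" and F: "(-w) \<bullet> a \<ge> 0" using w False by simp_all
    define H where "H = {y::'a. w \<bullet> y = 0}"
    have H: "negligible H" unfolding H_def using w by (intro negligible_hyperplane) auto
    have "measure lebesgue (cball 0 1 \<inter> ?Q) \<le> measure lebesgue (cball a r \<inter> cball 0 1 \<inter> {y. (-w) \<bullet> y \<le> 0})"
      by (rule measure_mono_fmeasurable)
         (use False Q in \<open>auto simp: target_label_def intro!: fmeasurable_Int_fmeasurable borel_closed closed_halfspace_le split: if_splits\<close>)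
    also have "\<dots> \<le> measure lebesgue (cball a r \<inter> cball 0 1 \<inter> {y. (-w) \<bullet> y \<ge> 0})"
      by (rule reflection_halfspace_le[OF w' F])
    also have "\<dots> \<le> measure lebesgue ((cball 0 1 \<inter> ?P) \<union> H)"
    proof (rule measure_mono_fmeasurable)
      show "(cball 0 1 \<inter> ?P) \<union> H \<in> lmeasurable"
        using P H by (simp add: fmeasurable.Un negligible_imp_measurable)
    qed (use False in \<open>auto simp: H_def target_label_def split: if_splits\<close>)
    also have "\<dots> \<le> measure lebesgue (cball 0 1 \<inter> ?P) + measure lebesgue H"
      by (rule measure_Un_le) (use P H in \<open>auto simp: negligible_imp_sets\<close>)
    also have "measure lebesgue H = 0" using H negligible_imp_measure0 by blast
    finally show ?thesis by simp
  qed
qed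

text \<open>For \<open>a\<close> in the unit ball, \<open>B(a,r) \<inter> B(0,1)\<close> contains a ball of radius \<open>r/2\<close>, hence occupies at
  least the fraction \<open>(r/2)^d\<close> of the unit ball.\<close>

lemma ball_intersection_fraction_lower:
  fixes a :: "'a::euclidean_space"
  assumes "norm a \<le> 1" "0 < r" "r \<le> 1"
  shows "measure lborel (cball 0 1 \<inter> cball a r) / measure lborel (cball (0::'a) 1) \<ge> (r/2) ^ DIM('a)"
proof -
  define z where "z = (1 - r/2) *\<^sub>R a"
  have sub: "ball z (r/2) \<subseteq> cball 0 1 \<inter> cball a r"
  proof
    fix y assume "y \<in> ball z (r/2)"
    then have y: "norm (y - z) < r/2" by (simp add: dist_norm norm_minus_commute)
    have "z - a = (- (r/2)) *\<^sub>R a" by (simp add: z_def algebra_simps)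
    then have "norm (z - a) = (r/2) * norm a" using assms by simp
    also have "\<dots> \<le> r/2" using assms by (simp add: mult_left_le)
    finally have za: "norm (z - a) \<le> r/2" .
    have "norm z = (1 - r/2) * norm a" using assms by (simp add: z_def)
    also have "\<dots> \<le> 1 - r/2" using assms by (simp add: mult_left_le)
    finally have zn: "norm z \<le> 1 - r/2" .
    have "norm (y - a) \<le> norm (y - z) + norm (z - a)"
      by (metis diff_add_cancel norm_triangle_ineq add_diff_eq)
    moreover have "norm y \<le> norm (y - z) + norm z"
      by (metis diff_add_cancel norm_triangle_ineq)
    ultimately show "y \<in> cball 0 1 \<inter> cball a r" using y za zn
      by (auto simp: dist_norm norm_minus_commute)
  qed
  have "measure lborel (ball z (r/2)) \<le> measure lborel (cball 0 1 \<inter> cball a r)"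
  proof (rule measure_mono_fmeasurable[OF sub])
    have "cball (0::'a) 1 \<in> fmeasurable lborel"
      using emeasure_lborel_cball_finite[of "0::'a" 1] by (simp add: fmeasurable_def)
    then show "cball 0 1 \<inter> cball a r \<in> fmeasurable lborel"
      by (rule fmeasurableI2) auto
  qed auto
  moreover have "measure lborel (ball z (r/2)) = unit_ball_vol DIM('a) * (r/2) ^ DIM('a)"
    using assms content_ball[of "r/2" z] by simp
  moreover have "measure lborel (cball (0::'a) 1) = unit_ball_vol DIM('a)"
    using content_cball[of 1 "0::'a"] by simp
  moreover have "unit_ball_vol DIM('a) > 0" by simp
  ultimately show ?thesis by (simp add: field_simps)
qed

abbreviation unit_ball_law :: "'a::euclidean_space measure" where
  "unit_ball_law \<equiv> uniform_measure lborel (cball 0 1)"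

lemma unit_ball_volume_pos_finite:
  "emeasure lborel (cball (0::'a::euclidean_space) 1) \<noteq> 0"
  "emeasure lborel (cball (0::'a::euclidean_space) 1) \<noteq> \<top>"
proof -
  have "unit_ball_vol (real DIM('a)) > 0" by (rule unit_ball_vol_pos) simp
  then have "unit_ball_vol (real DIM('a)) \<noteq> 0" by (metis less_irrefl)
  then show "emeasure lborel (cball (0::'a) 1) \<noteq> 0" by (simp add: emeasure_cball)
  show "emeasure lborel (cball (0::'a) 1) \<noteq> \<top>"
    using emeasure_lborel_cball_finite[of "0::'a" 1] by auto
qed

lemma prob_space_unit_ball_law: "prob_space (unit_ball_law :: 'a::euclidean_space measure)"
  by (rule prob_space_uniform_measure) (use unit_ball_volume_pos_finite in auto)

lemma measure_unit_ball_law: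
  "A \<in> sets borel \<Longrightarrow> measure (unit_ball_law :: 'a::euclidean_space measure) A
     = measure lborel (cball 0 1 \<inter> A) / measure lborel (cball (0::'a) 1)"
  by (subst measure_uniform_measure) (auto simp: unit_ball_volume_pos_finite)

lemma neighbour_score_measurable[measurable]:
  fixes f g :: "'b \<Rightarrow> 'a::euclidean_space"
  assumes [measurable]: "f \<in> M \<rightarrow>\<^sub>M borel" "g \<in> M \<rightarrow>\<^sub>M borel"
  shows "(\<lambda>x. neighbour_score r \<epsilon> w (f x) (g x)) \<in> borel_measurable M"
  unfolding neighbour_score_def target_label_def by measurable

text \<open>The expected contribution of a uniform random neighbour is at least \<open>\<mu> = \<epsilon>/2 \<cdot> (r/2)^d\<close>: with \<open>p\<close> and \<open>q\<close>
  the probabilities of an agreeing and a disagreeing neighbour, the expectation is \<open>(p - q) + \<epsilon>(p + q)/2\<close>,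
  where \<open>q \<le> p\<close> by the reflection argument and \<open>p + q \<ge> (r/2)^d\<close>.\<close>

lemma expected_neighbour_score_lower:
  fixes w a :: "'a::euclidean_space"
  assumes w: "norm w = 1" and a: "norm a \<le> 1" and r: "0 < r" "r \<le> 1" and e: "0 < \<epsilon>"
  shows "(\<integral>b. neighbour_score r \<epsilon> w a b \<partial>unit_ball_law) \<ge> \<epsilon>/2 * (r/2) ^ DIM('a)"
proof -
  interpret U: prob_space "unit_ball_law :: 'a measure" by (rule prob_space_unit_ball_law)
  define P where "P = {b \<in> space (borel::'a measure). dist a b \<le> r \<and> target_label w b = target_label w a}"
  define Q where "Q = {b \<in> space (borel::'a measure). dist a b \<le> r \<and> target_label w b \<noteq> target_label w a}"
  have [measurable]: "P \<in> sets borel" "Q \<in> sets borel" unfolding P_def Q_def by measurable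
  let ?p = "measure unit_ball_law P" and ?q = "measure unit_ball_law Q"
  have V: "measure lborel (cball (0::'a) 1) > 0"
    using content_cball[of 1 "0::'a"] by simp
  have integrable: "integrable unit_ball_law (indicator A :: 'a \<Rightarrow> real)" if "A \<in> sets borel" for A
  proof -
    have "A \<in> sets unit_ball_law" using that by simp
    then show ?thesis using U.emeasure_finite[of A]
      by (auto intro!: integrable_real_indicator simp only: top.not_eq_extremum infinity_ennreal_def)
  qed
  have "neighbour_score r \<epsilon> w a b = (1 + \<epsilon>/2) * indicator P b + (\<epsilon>/2 - 1) * indicator Q b" for b
    by (auto simp: neighbour_score_def P_def Q_def indicator_def)
  then have "(\<integral>b. neighbour_score r \<epsilon> w a b \<partial>unit_ball_law)
      = (\<integral>b. (1 + \<epsilon>/2) * indicator P b + (\<epsilon>/2 - 1) * indicator Q b \<partial>unit_ball_law)"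
    by simp
  also have "\<dots> = (1 + \<epsilon>/2) * ?p + (\<epsilon>/2 - 1) * ?q"
    using integrable[of P] integrable[of Q] by (subst Bochner_Integration.integral_add) auto
  also have "\<dots> = (?p - ?q) + \<epsilon>/2 * (?p + ?q)"
    by (simp add: algebra_simps)
  finally have expectation: "(\<integral>b. neighbour_score r \<epsilon> w a b \<partial>unit_ball_law) = (?p - ?q) + \<epsilon>/2 * (?p + ?q)" .
  have "?q \<le> ?p"
  proof -
    have "cball 0 1 \<inter> Q = cball 0 1 \<inter> {b. dist a b \<le> r \<and> target_label w b \<noteq> target_label w a}"
         "cball 0 1 \<inter> P = cball 0 1 \<inter> {b. dist a b \<le> r \<and> target_label w b = target_label w a}"
      by (auto simp: P_def Q_def)
    then have "measure lborel (cball 0 1 \<inter> Q) \<le> measure lborel (cball 0 1 \<inter> P)"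
      using disagreeing_part_le_agreeing_part[OF w, of a r]
        measure_completion[of "cball 0 1 \<inter> P" lborel] measure_completion[of "cball 0 1 \<inter> Q" lborel]
      by auto
    then show ?thesis
      using V by (simp add: measure_unit_ball_law divide_right_mono)
  qed
  moreover have "(r/2) ^ DIM('a) \<le> ?p + ?q"
  proof -
    have "measure unit_ball_law (P \<union> Q) = ?p + ?q"
      by (rule U.finite_measure_Union) (auto simp: P_def Q_def)
    moreover have "P \<union> Q = cball a r" by (auto simp: P_def Q_def)
    moreover have "measure unit_ball_law (cball a r) \<ge> (r/2) ^ DIM('a)"
      using ball_intersection_fraction_lower[OF a r] by (simp add: measure_unit_ball_law)
    ultimately show ?thesis by simp
  qed
  then have "\<epsilon>/2 * (r/2) ^ DIM('a) \<le> \<epsilon>/2 * (?p + ?q)"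
    using e by (intro mult_left_mono) auto
  ultimately show ?thesis unfolding expectation by linarith
qed

lemma indep_vars_PiM_components:
  fixes M :: "'b measure"
  assumes M: "prob_space M" and I: "I \<noteq> {}"
  shows "prob_space.indep_vars (PiM I (\<lambda>_. M)) (\<lambda>_. M) (\<lambda>j x. x j) I"
proof -
  interpret P: prob_space "PiM I (\<lambda>_. M)" by (rule prob_space_PiM) (rule M)
  show ?thesis
  proof (subst P.indep_vars_iff_distr_eq_PiM'[OF I])
    show "(\<lambda>x. x i) \<in> measurable (PiM I (\<lambda>_. M)) M" if "i \<in> I" for i
      using that by (rule measurable_component_singleton)
    have "distr (PiM I (\<lambda>_. M)) (PiM I (\<lambda>_. M)) (\<lambda>x. \<lambda>i\<in>I. x i)
        = distr (PiM I (\<lambda>_. M)) (PiM I (\<lambda>_. M)) (\<lambda>x. x)"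
      by (rule distr_cong) (auto simp: space_PiM PiE_def extensional_restrict)
    also have "\<dots> = PiM I (\<lambda>_. M)" by simp
    also have "\<dots> = PiM I (\<lambda>i. distr (PiM I (\<lambda>_. M)) M (\<lambda>x. x i))"
    proof (rule PiM_cong)
      fix i assume "i \<in> I"
      show "M = distr (PiM I (\<lambda>_. M)) M (\<lambda>x. x i)"
        by (rule sym, rule distr_PiM_component) (use M \<open>i \<in> I\<close> in auto)
    qed simp
    finally show "distr (PiM I (\<lambda>_. M)) (PiM I (\<lambda>_. M)) (\<lambda>x. \<lambda>i\<in>I. x i)
        = PiM I (\<lambda>i. distr (PiM I (\<lambda>_. M)) M (\<lambda>x. x i))" .
  qed
qed

lemma hoeffding_score_sum:
  fixes w a :: "'a::euclidean_space" and I :: "'i set"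
  assumes I: "finite I" "I \<noteq> {}" and w: "norm w = 1" and a: "norm a \<le> 1"
    and r: "0 < r" "r \<le> 1" and e: "0 < \<epsilon>" "\<epsilon> < 1"
  defines "\<mu> \<equiv> \<epsilon>/2 * (r/2) ^ DIM('a)"
  shows "measure (PiM I (\<lambda>_. unit_ball_law))
           {x \<in> space (PiM I (\<lambda>_. unit_ball_law)). (\<Sum>j\<in>I. neighbour_score r \<epsilon> w a (x j)) \<le> 0}
       \<le> exp (- 2 * real (card I) * \<mu>\<^sup>2 / 9)"
proof -
  let ?P = "PiM I (\<lambda>_. unit_ball_law :: 'a measure)"
  interpret P: prob_space ?P by (rule prob_space_PiM) (rule prob_space_unit_ball_law)
  define X where "X = (\<lambda>j x. neighbour_score r \<epsilon> w a ((x::'i \<Rightarrow> 'a) j))"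
  have mean: "P.expectation (X j) \<ge> \<mu>" if "j \<in> I" for j
  proof -
    have "P.expectation (X j) = (\<integral>b. neighbour_score r \<epsilon> w a b \<partial>distr ?P unit_ball_law (\<lambda>x. x j))"
      unfolding X_def by (subst integral_distr) (use that in measurable)
    also have "\<dots> = (\<integral>b. neighbour_score r \<epsilon> w a b \<partial>unit_ball_law)"
      by (subst distr_PiM_component) (use that prob_space_unit_ball_law in auto)
    finally show ?thesis using expected_neighbour_score_lower[OF w a r e(1)] unfolding \<mu>_def by simp
  qed
  interpret H: Hoeffding_ineq ?P I X "\<lambda>_. -1" "\<lambda>_. 2" "\<Sum>j\<in>I. P.expectation (X j)"
  proof unfold_locales
    show "P.indep_vars (\<lambda>_. borel) X I" unfolding X_def
      by (rule P.indep_vars_compose2[OF indep_vars_PiM_components[OF prob_space_unit_ball_law I(2)]])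
         measurable
    show "AE x in ?P. X j x \<in> {-1..2}" if "j \<in> I" for j
      using e by (auto simp: X_def neighbour_score_def)
  qed (use I in simp_all)
  have n_pos: "real (card I) > 0" using I by (simp add: card_gt_0_iff)
  have "real (card I) * \<mu> \<le> (\<Sum>j\<in>I. P.expectation (X j))"
    using sum_mono[of I "\<lambda>_. \<mu>", OF mean] by simp
  then have "measure ?P {x \<in> space ?P. (\<Sum>j\<in>I. X j x) \<le> 0}
      \<le> measure ?P {x \<in> space ?P. (\<Sum>j\<in>I. X j x) \<le> (\<Sum>j\<in>I. P.expectation (X j)) - real (card I) * \<mu>}"
    by (intro P.finite_measure_mono) (auto simp: X_def, measurable)
  also have "\<dots> \<le> exp (- 2 * (real (card I) * \<mu>)\<^sup>2 / (\<Sum>j\<in>I. (2 - (-1))\<^sup>2))"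
    by (rule H.Hoeffding_ineq_le) (use n_pos r e in \<open>auto simp: \<mu>_def\<close>)
  also have "\<dots> = exp (- 2 * real (card I) * \<mu>\<^sup>2 / 9)"
    using n_pos by (simp add: power2_eq_square field_simps)
  finally show ?thesis unfolding X_def .
qed

lemma measure_PiM_insert_le_sections:
  fixes M :: "'b measure"
  assumes M: "prob_space M" and I: "finite I" "i \<notin> I" and c: "0 \<le> c"
    and B: "B \<in> sets (PiM (insert i I) (\<lambda>_. M))"
    and sections: "AE y in M. measure (PiM I (\<lambda>_. M)) {x \<in> space (PiM I (\<lambda>_. M)). x(i := y) \<in> B} \<le> c"
  shows "measure (PiM (insert i I) (\<lambda>_. M)) B \<le> c"
proof -
  interpret M: prob_space M by (rule M)
  interpret PS: product_sigma_finite "\<lambda>_::'i. M"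
    by (simp add: product_sigma_finite_def M.sigma_finite_measure_axioms)
  interpret PI: prob_space "PiM I (\<lambda>_. M)" by (rule prob_space_PiM) (rule M)
  interpret PJ: prob_space "PiM (insert i I) (\<lambda>_. M)" by (rule prob_space_PiM) (rule M)
  define S where "S y = {x \<in> space (PiM I (\<lambda>_. M)). x(i := y) \<in> B}" for y
  have S_sets: "S y \<in> sets (PiM I (\<lambda>_. M))" if "y \<in> space M" for y
  proof -
    have "(\<lambda>x. x(i := y)) \<in> measurable (PiM I (\<lambda>_. M)) (PiM (insert i I) (\<lambda>_. M))"
      using that by (intro measurable_fun_upd[where J=I]) auto
    from measurable_sets[OF this B] show ?thesis
      by (simp add: S_def vimage_def Int_def conj_commute)
  qed
  have "emeasure (PiM (insert i I) (\<lambda>_. M)) B = (\<integral>\<^sup>+x. indicator B x \<partial>PiM (insert i I) (\<lambda>_. M))"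
    using B by simp
  also have "\<dots> = (\<integral>\<^sup>+ y. (\<integral>\<^sup>+ x. indicator B (x(i := y)) \<partial>PiM I (\<lambda>_. M)) \<partial>M)"
    by (rule PS.product_nn_integral_insert_rev[OF I]) (use B in measurable)
  also have "\<dots> = (\<integral>\<^sup>+ y. emeasure (PiM I (\<lambda>_. M)) (S y) \<partial>M)"
  proof (rule nn_integral_cong)
    fix y assume y: "y \<in> space M"
    have "(\<integral>\<^sup>+ x. indicator B (x(i := y)) \<partial>PiM I (\<lambda>_. M)) = (\<integral>\<^sup>+ x. indicator (S y) x \<partial>PiM I (\<lambda>_. M))"
      by (rule nn_integral_cong) (auto simp: S_def indicator_def)
    then show "(\<integral>\<^sup>+ x. indicator B (x(i := y)) \<partial>PiM I (\<lambda>_. M)) = emeasure (PiM I (\<lambda>_. M)) (S y)"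
      using S_sets[OF y] by simp
  qed
  also have "\<dots> \<le> (\<integral>\<^sup>+ y. ennreal c \<partial>M)"
  proof (rule nn_integral_mono_AE)
    show "AE y in M. emeasure (PiM I (\<lambda>_. M)) (S y) \<le> ennreal c"
      using sections by eventually_elim (simp add: S_def PI.emeasure_eq_measure ennreal_leI)
  qed
  also have "\<dots> = ennreal c" by (simp add: M.emeasure_space_1)
  finally show ?thesis using c by (simp add: PJ.emeasure_eq_measure)
qed

text \<open>Conditioning on the position of sensor \<open>i\<close>, the other \<open>N - 1\<close> sensors are i.i.d., so the probability
  that sensor \<open>i\<close> has nonpositive score is exponentially small in \<open>N\<close>.\<close>

lemma sensor_failure_bound:
  fixes w :: "'a::euclidean_space"
  assumes N: "2 \<le> N" "i < N" and w: "norm w = 1"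
    and r: "0 < r" "r \<le> 1" and e: "0 < \<epsilon>" "\<epsilon> < 1"
  defines "\<mu> \<equiv> \<epsilon>/2 * (r/2) ^ DIM('a)"
  shows "measure (sensor_measure N)
           {x \<in> space (sensor_measure N). sensor_score N r \<epsilon> w x i \<le> 0}
       \<le> exp (- 2 * real (N - 1) * \<mu>\<^sup>2 / 9)"
proof -
  define I where "I = {..<N} - {i}"
  have ins: "insert i I = {..<N}" using N by (auto simp: I_def)
  have I: "finite I" "i \<notin> I" "card I = N - 1" using N by (auto simp: I_def)
  then have "I \<noteq> {}" using N by auto
  let ?B = "{x \<in> space (PiM (insert i I) (\<lambda>_. unit_ball_law)). (\<Sum>j\<in>I. neighbour_score r \<epsilon> w (x i) (x j)) \<le> 0}"
  have bound: "measure (PiM (insert i I) (\<lambda>_. unit_ball_law)) ?B \<le> exp (- 2 * real (N - 1) * \<mu>\<^sup>2 / 9)"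
  proof (rule measure_PiM_insert_le_sections[OF prob_space_unit_ball_law I(1,2)])
    show "?B \<in> sets (PiM (insert i I) (\<lambda>_. unit_ball_law))" by measurable
    have "AE y in lborel. y \<in> cball 0 1 \<longrightarrow>
        measure (PiM I (\<lambda>_. unit_ball_law))
          {x \<in> space (PiM I (\<lambda>_. unit_ball_law)). x(i := y) \<in> ?B} \<le> exp (- 2 * real (N - 1) * \<mu>\<^sup>2 / 9)"
    proof (intro AE_I2 impI)
      fix y :: 'a assume y: "y \<in> cball 0 1"
      have "{x \<in> space (PiM I (\<lambda>_. unit_ball_law)). x(i := y) \<in> ?B}
          = {x \<in> space (PiM I (\<lambda>_. unit_ball_law)). (\<Sum>j\<in>I. neighbour_score r \<epsilon> w y (x j)) \<le> 0}"
      proof -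
        have "(\<Sum>j\<in>I. neighbour_score r \<epsilon> w ((x(i := y)) i) ((x(i := y)) j))
            = (\<Sum>j\<in>I. neighbour_score r \<epsilon> w y (x j))" for x :: "nat \<Rightarrow> 'a"
          using I(2) by (intro sum.cong) auto
        then show ?thesis
          using y by (auto simp: space_PiM PiE_def extensional_def)
      qed
      then show "measure (PiM I (\<lambda>_. unit_ball_law))
          {x \<in> space (PiM I (\<lambda>_. unit_ball_law)). x(i := y) \<in> ?B} \<le> exp (- 2 * real (N - 1) * \<mu>\<^sup>2 / 9)"
        using hoeffding_score_sum[OF I(1) \<open>I \<noteq> {}\<close> w _ r e, of y] y I(3) by (simp add: \<mu>_def)
    qed
    then show "AE y in unit_ball_law. measure (PiM I (\<lambda>_. unit_ball_law))
          {x \<in> space (PiM I (\<lambda>_. unit_ball_law)). x(i := y) \<in> ?B} \<le> exp (- 2 * real (N - 1) * \<mu>\<^sup>2 / 9)"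
      by (intro AE_uniform_measureI) auto
  qed simp
  have law: "sensor_measure N = PiM (insert i I) (\<lambda>_. unit_ball_law)"
    by (simp add: sensor_measure_def ins)
  have score: "sensor_score N r \<epsilon> w x i = (\<Sum>j\<in>I. neighbour_score r \<epsilon> w (x i) (x j))" for x
    by (simp add: sensor_score_def I_def)
  show ?thesis unfolding law score by (rule bound)
qed

text \<open>Union bound over the \<open>N\<close> sensors.\<close>

lemma target_equilibrium_prob_lower:
  fixes w :: "'a::euclidean_space"
  assumes N: "2 \<le> N" and w: "norm w = 1"
    and r: "0 < r" "r \<le> 1" and e: "0 < \<epsilon>" "\<epsilon> < 1"
  defines "c \<equiv> 2 * (\<epsilon>/2 * (r/2) ^ DIM('a))\<^sup>2 / 9"
  shows "measure (sensor_measure N) {x \<in> space (sensor_measure N). eps_equilibrium N r x \<epsilon> (target_config w x)}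
      \<ge> 1 - real N * exp (- c * real (N - 1))"
proof -
  let ?M = "sensor_measure N :: (nat \<Rightarrow> 'a) measure"
  interpret P: prob_space ?M
    unfolding sensor_measure_def by (rule prob_space_PiM) (rule prob_space_unit_ball_law)
  define G where "G = {x \<in> space ?M. eps_equilibrium N r x \<epsilon> (target_config w x)}"
  define B where "B i = {x \<in> space ?M. sensor_score N r \<epsilon> w x i \<le> 0}" for i
  have G_eq: "G = {x \<in> space ?M. \<forall>i<N. (\<exists>j\<in>{..<N}-{i}. dist (x i) (x j) \<le> r) \<and> 0 \<le> sensor_score N r \<epsilon> w x i}"
    unfolding G_def target_equilibrium_iff ..
  have G_event: "G \<in> P.events"
    unfolding G_eq sensor_measure_def sensor_score_def by measurable
  have B_event: "B i \<in> P.events" if "i \<in> {..<N}" for i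
    using that unfolding B_def sensor_measure_def sensor_score_def by measurable
  have rearrange: "- 2 * t * m / 9 = - (2 * m / 9) * t" for t m :: real
    by simp
  have "space ?M - G \<subseteq> (\<Union>i<N. B i)"
  proof
    fix x assume x: "x \<in> space ?M - G"
    then obtain i where "i < N" "sensor_score N r \<epsilon> w x i \<le> 0"
      using non_equilibrium_has_bad_sensor[of N r x \<epsilon> w] unfolding G_def by blast
    with x show "x \<in> (\<Union>i<N. B i)" unfolding B_def by blast
  qed
  then have "P.prob (space ?M - G) \<le> P.prob (\<Union>i<N. B i)"
    by (rule P.finite_measure_mono) (use B_event in auto)
  also have "\<dots> \<le> (\<Sum>i<N. P.prob (B i))"
    by (rule P.finite_measure_subadditive_finite) (use B_event in auto)
  also have "\<dots> \<le> (\<Sum>i<N. exp (- c * real (N - 1)))"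
  proof (rule sum_mono)
    fix i assume "i \<in> {..<N}"
    then have "P.prob (B i) \<le> exp (- 2 * real (N - 1) * (\<epsilon>/2 * (r/2) ^ DIM('a))\<^sup>2 / 9)"
      unfolding B_def using sensor_failure_bound[OF N _ w r e] by simp
    also have "- 2 * real (N - 1) * (\<epsilon>/2 * (r/2) ^ DIM('a))\<^sup>2 / 9 = - c * real (N - 1)"
      unfolding c_def by (rule rearrange)
    finally show "P.prob (B i) \<le> exp (- c * real (N - 1))" .
  qed
  also have "\<dots> = real N * exp (- c * real (N - 1))" by (simp only: sum_constant card_lessThan)
  finally show ?thesis
    using P.prob_compl[OF G_event] unfolding G_def by linarith
qed

text \<open>An explicit bound showing that \<open>N e^{-c(N-1)} \<to> 0\<close>, via \<open>e^x \<ge> x^2/2\<close>.\<close>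

lemma linear_times_exp_decay_le:
  assumes c: "c > 0" and N: "2 \<le> N"
  shows "real N * exp (- c * real (N - 1)) \<le> 8 / (c\<^sup>2 * real N)"
proof -
  have N1: "real (N - 1) \<ge> real N / 2" using N by (simp add: of_nat_diff)
  have x0: "c * real (N - 1) \<ge> 0" using c by simp
  have "exp (c * real (N - 1)) \<ge> 1 + c * real (N - 1) + (c * real (N - 1))\<^sup>2 / 2"
    by (rule exp_lower_Taylor_quadratic[OF x0])
  moreover have "(c * real (N - 1))\<^sup>2 \<ge> (c * (real N / 2))\<^sup>2"
    using N1 c N by (intro power_mono mult_left_mono) auto
  ultimately have E: "exp (c * real (N - 1)) \<ge> c\<^sup>2 * (real N)\<^sup>2 / 8"
    using x0 by (simp add: power_mult_distrib power_divide)
  have Np: "real N > 0" using N by simp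
  have "real N * exp (- c * real (N - 1)) = real N / exp (c * real (N - 1))"
    by (simp add: exp_minus field_simps)
  also have "\<dots> \<le> real N / (c\<^sup>2 * (real N)\<^sup>2 / 8)"
    using E c Np by (intro divide_left_mono) auto
  also have "\<dots> = 8 / (c\<^sup>2 * real N)" using Np c by (simp add: field_simps power2_eq_square)
  finally show ?thesis .
qed

lemma linear_times_exp_decay_eventually_le:
  assumes c: "c > 0" and \<delta>: "\<delta> > 0"
  shows "\<exists>N0. \<forall>N\<ge>N0. 2 \<le> N \<and> real N * exp (- c * real (N - 1)) \<le> \<delta>"
proof (intro exI allI impI conjI)
  fix N assume N: "max 2 (nat \<lceil>8 / (c\<^sup>2 * \<delta>)\<rceil>) \<le> N"
  then show N2: "2 \<le> N" by simp
  have "8 / (c\<^sup>2 * \<delta>) \<le> real N" using N by linarith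
  then have "8 / (c\<^sup>2 * real N) \<le> \<delta>"
    using c \<delta> N2 by (simp add: divide_le_eq mult.commute mult.left_commute)
  then show "real N * exp (- c * real (N - 1)) \<le> \<delta>"
    using linear_times_exp_decay_le[OF c N2] by linarith
qed

theorem lemma1:
  fixes w :: "'a::euclidean_space" and r \<epsilon> \<delta> :: real
  assumes "0 < r" "r \<le> 1" "norm w = 1"
    and "0 < \<epsilon>" "\<epsilon> < 1" "0 < \<delta>" "\<delta> < 1"
  shows "\<exists>N0. \<forall>N\<ge>N0.
           measure (sensor_measure N)
             {x \<in> space (sensor_measure N). eps_equilibrium N r x \<epsilon> (target_config w x)}
           \<ge> 1 - \<delta>"
proof -
  define c where "c = 2 * (\<epsilon>/2 * (r/2) ^ DIM('a))\<^sup>2 / 9"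
  have "c > 0" using assms by (simp add: c_def)
  then obtain N0 where N0: "\<And>N. N \<ge> N0 \<Longrightarrow> 2 \<le> N \<and> real N * exp (- c * real (N - 1)) \<le> \<delta>"
    using linear_times_exp_decay_eventually_le[OF _ \<open>0 < \<delta>\<close>] by blast
  show ?thesis
  proof (intro exI allI impI)
    fix N assume "N \<ge> N0"
    with N0 target_equilibrium_prob_lower[of N w r \<epsilon>] assms
    show "measure (sensor_measure N)
            {x \<in> space (sensor_measure N). eps_equilibrium N r x \<epsilon> (target_config w x)} \<ge> 1 - \<delta>"
      unfolding c_def by fastforce
  qed
qed

end
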